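(* Let $u>0$ and suppose there is an open set $S\ni\theta_i$ with $\sup_{\theta\in S}E_\theta|X_{i,t}|^p<\infty$ for some $p>u$. Then for every $k\in\mathbb N_0$, $$\sup_{\theta\in S}m_\theta^{(k)}(u)=\sup_{\theta\in S}\frac1{\sqrt{2\pi}}\sum_{n=0}^\infty\exp\Big(-\frac{Q_n(\theta)^2}{2u}\Big)|Q_n(\theta)|^k<\infty.$$
   Context: $X_{i,t}$ is an $\mathbb N_0$-valued random variable with distribution depending on $\theta\in\mathbb R^{K_i}$, $C_n(\theta)=P_\theta[X_{i,t}\le n]$, $Q_n(\theta)=\Phi^{-1}(C_n(\theta))$ with $\Phi$ the standard normal CDF; summands with $Q_n(\theta)=\pm\infty$ are interpreted as $0$. *)

theory Defs
  imports "HOL-Probability.Probability"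
begin

definition Phi :: "real \<Rightarrow> real" where
  "Phi x = measure (density lborel std_normal_density) {..x}"

text \<open>Inverse of \<Phi> on (0,1); outside (0,1) it is \<plusminus>\<infinity> and is never used.\<close>
definition Phi_inv :: "real \<Rightarrow> real" where
  "Phi_inv c = (THE x. Phi x = c)"

definition Cn :: "('a \<Rightarrow> nat pmf) \<Rightarrow> 'a \<Rightarrow> nat \<Rightarrow> real" where
  "Cn P \<theta> n = measure_pmf.prob (P \<theta>) {..n}"

text \<open>Q_n(\<theta>) = \<Phi>^{-1}(C_n(\<theta>)), meaningful (finite) iff 0 < C_n(\<theta>) < 1.\<close>
definition Qn :: "('a \<Rightarrow> nat pmf) \<Rightarrow> 'a \<Rightarrow> nat \<Rightarrow> real" where
  "Qn P \<theta> n = Phi_inv (Cn P \<theta> n)"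

text \<open>n-th summand of m_\<theta>^{(k)}(u); summands with Q_n = \<plusminus>\<infinity> (C_n \<in> {0,1}) are 0.\<close>
definition m_summand :: "('a \<Rightarrow> nat pmf) \<Rightarrow> nat \<Rightarrow> real \<Rightarrow> 'a \<Rightarrow> nat \<Rightarrow> real" where
  "m_summand P k u \<theta> n =
     (if 0 < Cn P \<theta> n \<and> Cn P \<theta> n < 1
      then exp (- (Qn P \<theta> n)\<^sup>2 / (2 * u)) * \<bar>Qn P \<theta> n\<bar> ^ k / sqrt (2 * pi)
      else 0)"

text \<open>m_\<theta>^{(k)}(u) as an extended nonnegative real (the summands are nonnegative).\<close>
definition m_fun :: "('a \<Rightarrow> nat pmf) \<Rightarrow> nat \<Rightarrow> real \<Rightarrow> 'a \<Rightarrow> ennreal" where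
  "m_fun P k u \<theta> = (\<Sum>n. ennreal (m_summand P k u \<theta> n))"

end

theory Submission
  imports Defs "HOL-Real_Asymp.Real_Asymp"
begin

text \<open>
  By Markov's inequality the moment bound gives \<open>1 - C\<^sub>n(\<theta>) \<le> M / (n + 1)^p\<close> uniformly on \<open>S\<close>.
  On the other hand \<open>1 - \<Phi>(q) \<ge> \<phi>(|q| + 1)\<close>, and for \<open>1/p < \<alpha> < 1/u\<close> the summand
  \<open>exp (-q\<^sup>2/(2u)) |q|^k\<close> is at most a constant times \<open>\<phi>(|q| + 1)^\<alpha>\<close>, since the Gaussian
  with the smaller variance \<open>u < 1/\<alpha>\<close> absorbs both the polynomial factor and the shift by 1.
  Hence the \<open>n\<close>-th summand is \<open>O((n + 1)^(-p\<alpha>))\<close> uniformly in \<open>\<theta> \<in> S\<close>, and \<open>p\<alpha> > 1\<close>.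
\<close>

lemma Phi_eq_cdf: "Phi = cdf std_normal_distribution"
  by (simp add: fun_eq_iff Phi_def cdf_def)

lemma std_normal_density_pos: "std_normal_density x > 0"
  by (simp add: std_normal_density_def)

lemma std_normal_density_antimono: "\<bar>x\<bar> \<le> t \<Longrightarrow> std_normal_density t \<le> std_normal_density x"
  unfolding std_normal_density_def
  by (intro mult_left_mono) (auto, metis abs_ge_zero abs_le_square_iff abs_of_nonneg order_trans)

lemma std_normal_measure_interval_ge:
  assumes "a \<le> b" and "\<And>x. a < x \<Longrightarrow> x \<le> b \<Longrightarrow> \<bar>x\<bar> \<le> t"
  shows "std_normal_density t * (b - a) \<le> measure std_normal_distribution {a<..b}"
proof -
  interpret real_distribution std_normal_distribution by (rule real_dist_normal_dist)
  have "ennreal (std_normal_density t * (b - a))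
      = (\<integral>\<^sup>+ x. ennreal (std_normal_density t) * indicator {a<..b} x \<partial>lborel)"
    using assms(1) std_normal_density_pos[of t] by (simp add: nn_integral_cmult_indicator ennreal_mult)
  also have "\<dots> \<le> (\<integral>\<^sup>+ x. ennreal (std_normal_density x) * indicator {a<..b} x \<partial>lborel)"
    using assms(2) by (intro nn_integral_mono) (auto split: split_indicator intro: std_normal_density_antimono)
  also have "\<dots> = ennreal (measure std_normal_distribution {a<..b})"
    by (simp add: emeasure_density emeasure_eq_measure[symmetric])
  finally show ?thesis by (simp add: ennreal_le_iff)
qed

lemma Phi_strict_mono: "strict_mono Phi"
proof
  fix a b :: real assume "a < b"
  interpret real_distribution std_normal_distribution by (rule real_dist_normal_dist)
  have "0 < std_normal_density (\<bar>a\<bar> + \<bar>b\<bar>) * (b - a)"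
    using \<open>a < b\<close> std_normal_density_pos by simp
  also have "\<dots> \<le> measure std_normal_distribution {a<..b}"
    using \<open>a < b\<close> by (intro std_normal_measure_interval_ge) auto
  finally show "Phi a < Phi b"
    using cdf_diff_eq[OF \<open>a < b\<close>] by (simp add: Phi_eq_cdf)
qed

lemma isCont_Phi: "isCont Phi x"
proof -
  interpret real_distribution std_normal_distribution by (rule real_dist_normal_dist)
  have "measure std_normal_distribution {x} = 0"
    by (simp add: measure_def emeasure_density)
  then show ?thesis by (simp add: Phi_eq_cdf isCont_cdf)
qed

lemma Phi_Phi_inv:
  assumes "0 < c" "c < 1"
  shows "Phi (Phi_inv c) = c"
proof -
  interpret real_distribution std_normal_distribution by (rule real_dist_normal_dist)
  obtain a where below: "Phi a < c"
    using order_tendstoD(2)[OF cdf_lim_at_bot assms(1)]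
    by (auto simp: Phi_eq_cdf eventually_at_bot_linorder)
  obtain b where above: "\<And>x. x \<ge> b \<Longrightarrow> Phi x > c"
    using order_tendstoD(1)[OF cdf_lim_at_top_prob assms(2)]
    by (auto simp: Phi_eq_cdf eventually_at_top_linorder)
  have "\<exists>x. a \<le> x \<and> x \<le> max a b \<and> Phi x = c"
    using below above[of "max a b"] by (intro IVT isCont_Phi allI impI) simp_all
  then obtain x where "Phi x = c" by blast
  moreover have "Phi y = c \<Longrightarrow> y = x" for y
    using \<open>Phi x = c\<close> strict_mono_eq[OF Phi_strict_mono, of y x] by simp
  ultimately have "Phi_inv c = x"
    unfolding Phi_inv_def by (rule the_equality)
  with \<open>Phi x = c\<close> show ?thesis by simp
qed

lemma one_minus_Phi_ge: "std_normal_density (\<bar>q\<bar> + 1) \<le> 1 - Phi q"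
proof -
  interpret real_distribution std_normal_distribution by (rule real_dist_normal_dist)
  have "std_normal_density (\<bar>q\<bar> + 1) * ((q + 1) - q) \<le> measure std_normal_distribution {q<..q + 1}"
    by (intro std_normal_measure_interval_ge) auto
  moreover have "Phi (q + 1) \<le> 1"
    by (simp add: Phi_eq_cdf cdf_bounded_prob)
  ultimately show ?thesis
    using cdf_diff_eq[of q "q + 1"] by (simp add: Phi_eq_cdf)
qed

lemma continuous_tendsto_at_top_bounded_above:
  fixes f :: "real \<Rightarrow> real"
  assumes "continuous_on {a..} f" "(f \<longlongrightarrow> l) at_top"
  shows "\<exists>B. \<forall>t\<ge>a. f t \<le> B"
proof -
  obtain T where T: "\<And>t. t \<ge> T \<Longrightarrow> f t < l + 1"
    using order_tendstoD(2)[OF assms(2), of "l + 1"] by (auto simp: eventually_at_top_linorder)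
  have "compact (f ` {a..max a T})"
    using assms(1) by (intro compact_continuous_image) (auto intro: continuous_on_subset)
  then obtain B where B: "\<And>t. t \<in> {a..max a T} \<Longrightarrow> f t \<le> B"
    using compact_imp_bounded bounded_pos by (metis abs_le_D1 image_eqI real_norm_def)
  have "f t \<le> max B (l + 1)" if "t \<ge> a" for t
  proof (cases "t \<le> max a T")
    case True
    then show ?thesis using that B[of t] by (simp add: le_max_iff_disj)
  next
    case False
    then show ?thesis using T[of t] by (simp add: le_max_iff_disj)
  qed
  then show ?thesis by blast
qed

text \<open>Since \<open>\<alpha> < 1/u\<close>, the exponent \<open>- t\<^sup>2/(2u) + \<alpha> (t + 1)\<^sup>2/2\<close> equals \<open>- d t\<^sup>2 + \<alpha> t + \<alpha>/2\<close> with \<open>d > 0\<close>.\<close>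
lemma gaussian_power_le_std_normal_powr:
  fixes u \<alpha> :: real
  assumes "u > 0" "\<alpha> > 0" "\<alpha> < 1 / u"
  shows "\<exists>C. \<forall>t\<ge>0. exp (- t\<^sup>2 / (2 * u)) * t ^ k \<le> C * std_normal_density (t + 1) powr \<alpha>"
proof -
  define d where "d = (1 / u - \<alpha>) / 2"
  have "d > 0" using assms by (simp add: d_def)
  have "1 / u = \<alpha> + 2 * d" using assms(1) by (simp add: d_def field_simps)
  have "continuous_on {0..} (\<lambda>t. exp (- d * t\<^sup>2 + \<alpha> * t) * t ^ k)"
    by (intro continuous_intros)
  moreover from \<open>d > 0\<close> have "((\<lambda>t. exp (- d * t\<^sup>2 + \<alpha> * t) * t ^ k) \<longlongrightarrow> 0) at_top"
    by real_asymp
  ultimately have "\<exists>B. \<forall>t\<ge>0. exp (- d * t\<^sup>2 + \<alpha> * t) * t ^ k \<le> B"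
    by (rule continuous_tendsto_at_top_bounded_above)
  then obtain B where B: "\<And>t. t \<ge> 0 \<Longrightarrow> exp (- d * t\<^sup>2 + \<alpha> * t) * t ^ k \<le> B"
    by blast
  define C where "C = B * exp (\<alpha> / 2) * sqrt (2 * pi) powr \<alpha>"
  have "exp (- t\<^sup>2 / (2 * u)) * t ^ k \<le> C * std_normal_density (t + 1) powr \<alpha>" if "t \<ge> 0" for t
  proof -
    have "- t\<^sup>2 / (2 * u) = - (1 / u) * t\<^sup>2 / 2" by simp
    also have "\<dots> = - (\<alpha> + 2 * d) * t\<^sup>2 / 2" by (simp only: \<open>1 / u = \<alpha> + 2 * d\<close>)
    also have "\<dots> = (- d * t\<^sup>2 + \<alpha> * t) + \<alpha> / 2 + - \<alpha> * (t + 1)\<^sup>2 / 2"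
      by (simp add: power2_eq_square field_simps)
    finally have "exp (- t\<^sup>2 / (2 * u)) * t ^ k
        = exp (- d * t\<^sup>2 + \<alpha> * t) * t ^ k * exp (\<alpha> / 2) * exp (- \<alpha> * (t + 1)\<^sup>2 / 2)"
      by (simp only: exp_add mult_ac)
    also have "\<dots> \<le> B * exp (\<alpha> / 2) * exp (- \<alpha> * (t + 1)\<^sup>2 / 2)"
      by (intro mult_right_mono B that) simp_all
    also have "exp (- \<alpha> * (t + 1)\<^sup>2 / 2) = sqrt (2 * pi) powr \<alpha> * std_normal_density (t + 1) powr \<alpha>"
      by (simp add: std_normal_density_def powr_divide exp_powr_real mult.commute)
    finally show ?thesis
      unfolding C_def by (simp only: mult.assoc)
  qed
  then show ?thesis by blast
qed

lemma m_summand_le_tail_powr: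
  fixes P :: "'a \<Rightarrow> nat pmf"
  assumes "u > 0" "\<alpha> > 0" "\<alpha> < 1 / u"
  shows "\<exists>K\<ge>0. \<forall>\<theta> n. m_summand P k u \<theta> n \<le> K * (1 - Cn P \<theta> n) powr \<alpha>"
proof -
  obtain C where C: "\<And>t. t \<ge> 0 \<Longrightarrow> exp (- t\<^sup>2 / (2 * u)) * t ^ k \<le> C * std_normal_density (t + 1) powr \<alpha>"
    using gaussian_power_le_std_normal_powr[OF assms] by blast
  have "0 \<le> C * std_normal_density 1 powr \<alpha>"
    using C[of 0] by (cases k) auto
  then have "C \<ge> 0"
    using std_normal_density_pos[of 1] by (simp add: zero_le_mult_iff)
  have "m_summand P k u \<theta> n \<le> C / sqrt (2 * pi) * (1 - Cn P \<theta> n) powr \<alpha>" for \<theta> n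
  proof (cases "0 < Cn P \<theta> n \<and> Cn P \<theta> n < 1")
    case True
    define t where "t = \<bar>Qn P \<theta> n\<bar>"
    have "Phi (Qn P \<theta> n) = Cn P \<theta> n"
      using True by (simp add: Qn_def Phi_Phi_inv)
    then have "std_normal_density (t + 1) \<le> 1 - Cn P \<theta> n"
      using one_minus_Phi_ge[of "Qn P \<theta> n"] by (simp add: t_def)
    then have tail: "std_normal_density (t + 1) powr \<alpha> \<le> (1 - Cn P \<theta> n) powr \<alpha>"
      using assms(2) std_normal_density_pos by (intro powr_mono2) auto
    have "m_summand P k u \<theta> n = exp (- t\<^sup>2 / (2 * u)) * t ^ k / sqrt (2 * pi)"
      using True by (simp add: m_summand_def t_def)
    also have "\<dots> \<le> C * std_normal_density (t + 1) powr \<alpha> / sqrt (2 * pi)"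
      using C[of t] by (intro divide_right_mono) (simp_all add: t_def)
    also have "\<dots> \<le> C * (1 - Cn P \<theta> n) powr \<alpha> / sqrt (2 * pi)"
      using tail \<open>C \<ge> 0\<close> by (intro divide_right_mono mult_left_mono) simp_all
    finally show ?thesis by simp
  next
    case False
    then have "m_summand P k u \<theta> n = 0"
      unfolding m_summand_def by (rule if_not_P)
    then show ?thesis using \<open>C \<ge> 0\<close> by simp
  qed
  then show ?thesis using \<open>C \<ge> 0\<close> by (intro exI[of _ "C / sqrt (2 * pi)"]) auto
qed

lemma pmf_tail_le_moment:
  fixes Q :: "nat pmf"
  assumes "p > 0" "0 \<le> M" "(\<integral>\<^sup>+ x. ennreal (real x powr p) \<partial>measure_pmf Q) \<le> ennreal M"
  shows "1 - measure_pmf.prob Q {..n} \<le> M / (real n + 1) powr p"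
proof -
  have "ennreal ((real n + 1) powr p * measure_pmf.prob Q (- {..n}))
      = (\<integral>\<^sup>+ x. ennreal ((real n + 1) powr p) * indicator (- {..n}) x \<partial>measure_pmf Q)"
    by (simp add: nn_integral_cmult_indicator measure_pmf.emeasure_eq_measure ennreal_mult)
  also have "\<dots> \<le> (\<integral>\<^sup>+ x. ennreal (real x powr p) \<partial>measure_pmf Q)"
    using assms(1) by (intro nn_integral_mono) (auto split: split_indicator intro!: ennreal_leI powr_mono2)
  also have "\<dots> \<le> ennreal M" by (rule assms(3))
  finally have "(real n + 1) powr p * measure_pmf.prob Q (- {..n}) \<le> M"
    using assms(2) by (simp add: ennreal_le_iff)
  moreover have "measure_pmf.prob Q (- {..n}) = 1 - measure_pmf.prob Q {..n}"
    using measure_pmf.prob_compl[of "{..n}" Q] by (simp add: Compl_eq_Diff_UNIV)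
  ultimately show ?thesis by (simp add: pos_le_divide_eq mult.commute)
qed

lemma SUP_m_fun_finite:
  fixes P :: "'a \<Rightarrow> nat pmf"
  assumes "0 < u" "u < p" and "0 \<le> M"
    and moment: "\<And>\<theta>. \<theta> \<in> S \<Longrightarrow> (\<integral>\<^sup>+ n. ennreal (real n powr p) \<partial>measure_pmf (P \<theta>)) \<le> ennreal M"
  shows "(SUP \<theta>\<in>S. m_fun P k u \<theta>) < \<infinity>"
proof -
  define \<alpha> where "\<alpha> = (1 / p + 1 / u) / 2"
  have "1 / p < 1 / u" using assms by (simp add: frac_less2)
  then have \<alpha>: "\<alpha> > 0" "\<alpha> < 1 / u" "p * \<alpha> > 1"
    using assms by (auto simp: \<alpha>_def field_simps)
  obtain K where "K \<ge> 0" and K: "\<And>\<theta> n. m_summand P k u \<theta> n \<le> K * (1 - Cn P \<theta> n) powr \<alpha>"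
    using m_summand_le_tail_powr[OF \<open>0 < u\<close> \<alpha>(1,2)] by blast
  define f where "f n = K * M powr \<alpha> * (real n + 1) powr (- (p * \<alpha>))" for n :: nat
  have "summable (\<lambda>n::nat. real (Suc n) powr (- (p * \<alpha>)))"
    using \<alpha>(3) by (subst summable_Suc_iff) (simp add: summable_real_powr_iff)
  then have "summable (\<lambda>n::nat. (real n + 1) powr (- (p * \<alpha>)))"
    by (simp add: add.commute)
  then have "summable f"
    unfolding f_def by (rule summable_mult)
  have bound: "m_summand P k u \<theta> n \<le> f n" if "\<theta> \<in> S" for \<theta> n
  proof -
    have "1 - Cn P \<theta> n \<le> M / (real n + 1) powr p"
      unfolding Cn_def using pmf_tail_le_moment[OF _ \<open>0 \<le> M\<close> moment[OF that]] assms by simp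
    then have "(1 - Cn P \<theta> n) powr \<alpha> \<le> (M / (real n + 1) powr p) powr \<alpha>"
      using \<alpha>(1) by (intro powr_mono2) (auto simp: Cn_def)
    also have "\<dots> = M powr \<alpha> * (real n + 1) powr (- (p * \<alpha>))"
      using \<open>0 \<le> M\<close> by (simp add: powr_divide powr_powr powr_minus_divide)
    finally have "K * (1 - Cn P \<theta> n) powr \<alpha> \<le> f n"
      unfolding f_def mult.assoc using \<open>K \<ge> 0\<close> by (rule mult_left_mono)
    then show ?thesis
      using K[of \<theta> n] by linarith
  qed
  have "0 \<le> f n" for n
    using \<open>K \<ge> 0\<close> \<open>0 \<le> M\<close> by (simp add: f_def)
  have "m_fun P k u \<theta> \<le> ennreal (suminf f)" if "\<theta> \<in> S" for \<theta>
  proof -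
    have "m_fun P k u \<theta> \<le> (\<Sum>n. ennreal (f n))"
      unfolding m_fun_def by (intro suminf_le ennreal_leI bound[OF that]) auto
    also have "\<dots> = ennreal (suminf f)"
      using \<open>\<And>n. 0 \<le> f n\<close> \<open>summable f\<close> by (rule suminf_ennreal2)
    finally show ?thesis .
  qed
  then have "(SUP \<theta>\<in>S. m_fun P k u \<theta>) \<le> ennreal (suminf f)"
    by (intro SUP_least)
  then show ?thesis
    by (rule order.strict_trans1) simp
qed

theorem mainTheorem8:
  fixes P :: "real ^ 'k \<Rightarrow> nat pmf"
    and \<theta>0 :: "real ^ 'k"
    and S :: "(real ^ 'k) set"
    and u :: real
  assumes "u > 0"
    and "open S" and "\<theta>0 \<in> S"
    and "\<exists>p > u. (SUP \<theta>\<in>S. \<integral>\<^sup>+ n. ennreal (real n powr p) \<partial>measure_pmf (P \<theta>)) < \<infinity>"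
  shows "\<forall>k::nat. (SUP \<theta>\<in>S. m_fun P k u \<theta>) < \<infinity>"
proof
  fix k :: nat
  obtain p where "p > u"
    and finite: "(SUP \<theta>\<in>S. \<integral>\<^sup>+ n. ennreal (real n powr p) \<partial>measure_pmf (P \<theta>)) < \<infinity>"
    using assms(4) by blast
  define M where "M = enn2real (SUP \<theta>\<in>S. \<integral>\<^sup>+ n. ennreal (real n powr p) \<partial>measure_pmf (P \<theta>))"
  have moment: "(\<integral>\<^sup>+ n. ennreal (real n powr p) \<partial>measure_pmf (P \<theta>)) \<le> ennreal M" if "\<theta> \<in> S" for \<theta>
    using SUP_upper[OF that] finite by (simp add: M_def ennreal_enn2real)
  show "(SUP \<theta>\<in>S. m_fun P k u \<theta>) < \<infinity>"
    using SUP_m_fun_finite[OF \<open>u > 0\<close> \<open>p > u\<close> _ moment] by (simp add: M_def)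
qed

end
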